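(* For any test point $(\mathbf{x}_{te},y_{te})$ with $\mathbf{x}_{te}\in\mathbb{R}^d$, $\|\mathbf{x}_{te}\|_2=1$, and any $\mathbf{x}_i\in\mathcal{X}$, $$\mathcal{I}_{ntk}(\mathbf{x}_i,\mathbf{x}_{te})=\alpha(\mathbf{x}_i,\mathbf{x}_{te})(f_{ntk}(\mathbf{x}_{te})-y_{te})(f^{\backslash i}_{ntk}(\mathbf{x}_i)-y_i)+\tfrac12\alpha(\mathbf{x}_i,\mathbf{x}_{te})^2(f^{\backslash i}_{ntk}(\mathbf{x}_i)-y_i)^2.$$
   Context: Training points $\mathcal{X}=\{\mathbf{x}_i\}_{i=1}^n\subset\mathbb{R}^d$ with $\|\mathbf{x}_i\|_2=1$, labels $\mathcal{Y}=(y_1,\dots,y_n)^\top$, $\lambda>0$. The NTK is $K^\infty(\mathbf{x},\mathbf{x}')=\frac{\mathbf{x}^\top\mathbf{x}'(\pi-\arccos(\mathbf{x}^\top\mathbf{x}'))}{2\pi}$; $\mathbf{K}^\infty_{tr}=[K^\infty(\mathbf{x}_i,\mathbf{x}_j)]_{i,j}$; for a point $\mathbf{x}$, $\mathbf{K}^\infty(\mathbf{x})=[K^\infty(\mathbf{x},\mathbf{x}_j)]_{j}\in\mathbb{R}^n$ (with $\mathbf{K}^\infty_{te}=\mathbf{K}^\infty(\mathbf{x}_{te})$). The NTK ridge predictor is $f_{ntk}(\mathbf{x})=\mathbf{K}^\infty(\mathbf{x})^\top(\mathbf{K}^\infty_{tr}+\lambda\mathbf{I}_n)^{-1}\mathcal{Y}$.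 Let $\mathbf{k}_{-i}$ and $k_{-ii}$ be the $i$-th column and $(i,i)$ entry of $(\mathbf{K}^\infty_{tr}+\lambda\mathbf{I}_n)^{-1}$; the leave-one-out predictor (kernel ridge regression with the $i$-th training point removed) is $f^{\backslash i}_{ntk}(\mathbf{x})=\mathbf{K}^\infty(\mathbf{x})^\top\left((\mathbf{K}^\infty_{tr}+\lambda\mathbf{I}_n)^{-1}-\frac{\mathbf{k}_{-i}\mathbf{k}_{-i}^\top}{k_{-ii}}\right)\mathcal{Y}$. Define $\mathcal{I}_{ntk}(\mathbf{x}_i,\mathbf{x}_{te})=\frac12(f^{\backslash i}_{ntk}(\mathbf{x}_{te})-y_{te})^2-\frac12(f_{ntk}(\mathbf{x}_{te})-y_{te})^2$ and $\alpha(\mathbf{x}_i,\mathbf{x}_{te})=(\mathbf{K}^\infty_{te})^\top(\mathbf{K}^\infty_{tr}+\lambda\mathbf{I}_n)^{-1}\mathbf{e}_i$. *)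

theory Defs
  imports "HOL-Analysis.Analysis"
begin

definition ntk :: "real^'d \<Rightarrow> real^'d \<Rightarrow> real" where
  "ntk x x' = (x \<bullet> x') * (pi - arccos (x \<bullet> x')) / (2 * pi)"

definition Ktr :: "('n::finite \<Rightarrow> real^'d) \<Rightarrow> real^'n^'n" where
  "Ktr X = (\<chi> i j. ntk (X i) (X j))"

definition Kvec :: "('n::finite \<Rightarrow> real^'d) \<Rightarrow> real^'d \<Rightarrow> real^'n" where
  "Kvec X x = (\<chi> j. ntk x (X j))"

definition Ainv :: "('n::finite \<Rightarrow> real^'d) \<Rightarrow> real \<Rightarrow> real^'n^'n" where
  "Ainv X lam = matrix_inv (Ktr X + lam *\<^sub>R mat 1)"

definition f_ntk :: "('n::finite \<Rightarrow> real^'d) \<Rightarrow> real^'n \<Rightarrow> real \<Rightarrow> real^'d \<Rightarrow> real" where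
  "f_ntk X Y lam x = Kvec X x \<bullet> (Ainv X lam *v Y)"

text \<open>Leave-one-out predictor, by the rank-one downdate formula of the paper:
  k_{-i} is the i-th column, k_{-ii} the (i,i) entry of (K_tr + lambda I)^{-1}.\<close>
definition f_loo :: "('n::finite \<Rightarrow> real^'d) \<Rightarrow> real^'n \<Rightarrow> real \<Rightarrow> 'n \<Rightarrow> real^'d \<Rightarrow> real" where
  "f_loo X Y lam i x =
     (let A = Ainv X lam in
      Kvec X x \<bullet> ((A - (\<chi> a b. (A $ a $ i * A $ b $ i) / A $ i $ i)) *v Y))"

definition I_ntk :: "('n::finite \<Rightarrow> real^'d) \<Rightarrow> real^'n \<Rightarrow> real \<Rightarrow> 'n \<Rightarrow> real^'d \<Rightarrow> real \<Rightarrow> real" where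
  "I_ntk X Y lam i xte yte =
     (f_loo X Y lam i xte - yte)^2 / 2 - (f_ntk X Y lam xte - yte)^2 / 2"

definition alpha_ntk :: "('n::finite \<Rightarrow> real^'d) \<Rightarrow> real \<Rightarrow> 'n \<Rightarrow> real^'d \<Rightarrow> real" where
  "alpha_ntk X lam i xte = Kvec X xte \<bullet> (Ainv X lam *v axis i 1)"

end

theory Submission
  imports Defs
begin

(* First, the NTK Gram matrix is positive semidefinite: for unit vectors,
   K(x, x') = t/4 + t arcsin t / (2 pi) with t = x . x', and arcsin has a power series with
   nonnegative coefficients, so by the Schur product theorem every term is a PSD kernel; the
   series only converges for |t| < 1, hence one passes through arcsin (r t) and lets r -> 1.
   Consequently K_tr + lambda I is symmetric positive definite, so its inverse A is symmetric
   with positive diagonal. Second, with q = (A e_i . Y) / A_ii, the rank-one downdate gives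
   f_loo(x) = f(x) - alpha(x_i, x) q at every x, while K_tr A = I - lambda A turns the residual
   at the removed training point into f_loo(x_i) - y_i = -q. Expanding the difference of the
   two squared losses yields the formula. *)

definition psd_kernel :: "('i::finite \<Rightarrow> 'i \<Rightarrow> real) \<Rightarrow> bool" where
  "psd_kernel h \<longleftrightarrow> (\<forall>v. 0 \<le> (\<Sum>i\<in>UNIV. \<Sum>j\<in>UNIV. v i * v j * h i j))"

lemma psd_kernelD: "psd_kernel h \<Longrightarrow> 0 \<le> (\<Sum>i\<in>UNIV. \<Sum>j\<in>UNIV. v i * v j * h i j)"
  unfolding psd_kernel_def by blast

lemma psd_kernel_add:
  assumes "psd_kernel h" "psd_kernel g"
  shows "psd_kernel (\<lambda>i j. h i j + g i j)"
  unfolding psd_kernel_def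
  using psd_kernelD[OF assms(1)] psd_kernelD[OF assms(2)]
  by (simp add: distrib_left sum.distrib add_nonneg_nonneg)

lemma psd_kernel_cmult:
  assumes "0 \<le> c" "psd_kernel h"
  shows "psd_kernel (\<lambda>i j. c * h i j)"
proof -
  have "(\<Sum>i\<in>UNIV. \<Sum>j\<in>UNIV. v i * v j * (c * h i j))
      = c * (\<Sum>i\<in>UNIV. \<Sum>j\<in>UNIV. v i * v j * h i j)" for v
    by (simp add: sum_distrib_left mult_ac)
  then show ?thesis
    using assms psd_kernelD unfolding psd_kernel_def by simp
qed

lemma psd_kernel_sum:
  fixes K :: "'n \<Rightarrow> 'i::finite \<Rightarrow> 'i \<Rightarrow> real"
  assumes "\<And>n. n \<in> S \<Longrightarrow> psd_kernel (K n)"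
  shows "psd_kernel (\<lambda>i j. \<Sum>n\<in>S. K n i j)"
  unfolding psd_kernel_def
proof
  fix v :: "'i \<Rightarrow> real"
  have "(\<Sum>i\<in>UNIV. \<Sum>j\<in>UNIV. v i * v j * (\<Sum>n\<in>S. K n i j))
      = (\<Sum>i\<in>UNIV. \<Sum>n\<in>S. \<Sum>j\<in>UNIV. v i * v j * K n i j)"
    unfolding sum_distrib_left by (intro sum.cong refl) (rule sum.swap)
  also have "\<dots> = (\<Sum>n\<in>S. \<Sum>i\<in>UNIV. \<Sum>j\<in>UNIV. v i * v j * K n i j)"
    by (rule sum.swap)
  also have "\<dots> \<ge> 0"
    by (intro sum_nonneg psd_kernelD assms)
  finally show "0 \<le> (\<Sum>i\<in>UNIV. \<Sum>j\<in>UNIV. v i * v j * (\<Sum>n\<in>S. K n i j))" .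
qed

lemma psd_kernel_tendsto:
  fixes K :: "nat \<Rightarrow> 'i::finite \<Rightarrow> 'i \<Rightarrow> real"
  assumes "\<And>k. psd_kernel (K k)" and "\<And>i j. (\<lambda>k. K k i j) \<longlonglongrightarrow> H i j"
  shows "psd_kernel H"
  unfolding psd_kernel_def
proof
  fix v :: "'i \<Rightarrow> real"
  have "(\<lambda>k. \<Sum>i\<in>UNIV. \<Sum>j\<in>UNIV. v i * v j * K k i j)
        \<longlonglongrightarrow> (\<Sum>i\<in>UNIV. \<Sum>j\<in>UNIV. v i * v j * H i j)"
    by (intro tendsto_sum tendsto_mult_left assms(2))
  then show "0 \<le> (\<Sum>i\<in>UNIV. \<Sum>j\<in>UNIV. v i * v j * H i j)"
    by (rule LIMSEQ_le_const) (use assms(1) psd_kernelD in blast)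
qed

lemma psd_kernel_suminf:
  fixes K :: "nat \<Rightarrow> 'i::finite \<Rightarrow> 'i \<Rightarrow> real"
  assumes "\<And>n. psd_kernel (K n)" and "\<And>i j. (\<lambda>n. K n i j) sums H i j"
  shows "psd_kernel H"
proof (rule psd_kernel_tendsto[where K = "\<lambda>m i j. \<Sum>n<m. K n i j"])
  show "psd_kernel (\<lambda>i j. \<Sum>n<m. K n i j)" for m
    by (rule psd_kernel_sum) (rule assms(1))
  show "(\<lambda>m. \<Sum>n<m. K n i j) \<longlonglongrightarrow> H i j" for i j
    using assms(2) unfolding sums_def .
qed

lemma psd_kernel_mult_inner:
  fixes x :: "'i::finite \<Rightarrow> 'a::euclidean_space"
  assumes "psd_kernel h"
  shows "psd_kernel (\<lambda>i j. (x i \<bullet> x j) * h i j)"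
  unfolding psd_kernel_def
proof
  fix v :: "'i \<Rightarrow> real"
  define w where "w b i = v i * (x i \<bullet> b)" for b i
  have "(\<Sum>i\<in>UNIV. \<Sum>j\<in>UNIV. v i * v j * ((x i \<bullet> x j) * h i j))
      = (\<Sum>i\<in>UNIV. \<Sum>j\<in>UNIV. \<Sum>b\<in>Basis. w b i * w b j * h i j)"
  proof (intro sum.cong refl)
    fix i j
    show "v i * v j * ((x i \<bullet> x j) * h i j) = (\<Sum>b\<in>Basis. w b i * w b j * h i j)"
      by (subst euclidean_inner) (simp add: w_def sum_distrib_left sum_distrib_right mult_ac)
  qed
  also have "\<dots> = (\<Sum>i\<in>UNIV. \<Sum>b\<in>Basis. \<Sum>j\<in>UNIV. w b i * w b j * h i j)"
    by (intro sum.cong refl) (rule sum.swap)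
  also have "\<dots> = (\<Sum>b\<in>Basis. \<Sum>i\<in>UNIV. \<Sum>j\<in>UNIV. w b i * w b j * h i j)"
    by (rule sum.swap)
  also have "\<dots> \<ge> 0"
    by (intro sum_nonneg psd_kernelD assms)
  finally show "0 \<le> (\<Sum>i\<in>UNIV. \<Sum>j\<in>UNIV. v i * v j * ((x i \<bullet> x j) * h i j))" .
qed

lemma psd_kernel_inner_power:
  fixes x :: "'i::finite \<Rightarrow> 'a::euclidean_space"
  shows "psd_kernel (\<lambda>i j. (x i \<bullet> x j) ^ m)"
proof (induction m)
  case 0
  have "(\<Sum>i\<in>UNIV. \<Sum>j\<in>UNIV. v i * v j) = (\<Sum>i\<in>UNIV. v i)\<^sup>2" for v :: "'i \<Rightarrow> real"
    by (simp add: power2_eq_square sum_product)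
  then show ?case by (simp add: psd_kernel_def)
next
  case (Suc m)
  then show ?case using psd_kernel_mult_inner[of _ x] by simp
qed

definition inv_sqrt_coeff :: "nat \<Rightarrow> real" where
  "inv_sqrt_coeff n = (real n - 1/2) gchoose n"

lemma inv_sqrt_coeff_nonneg: "0 \<le> inv_sqrt_coeff n"
  unfolding inv_sqrt_coeff_def gbinomial_prod_rev
  by (intro divide_nonneg_pos prod_nonneg) auto

lemma inv_sqrt_sums:
  assumes "\<bar>u\<bar> < 1"
  shows "(\<lambda>n. inv_sqrt_coeff n * u ^ n) sums inverse (sqrt (1 - u))"
proof -
  have "(\<lambda>n. ((-(1/2)) gchoose n) * (-u) ^ n) sums (1 + - u) powr (-(1/2))"
    using assms by (intro gen_binomial_real) simp
  moreover have "((-(1/2)) gchoose n) * (-u) ^ n = inv_sqrt_coeff n * u ^ n" for n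
    unfolding gbinomial_minus inv_sqrt_coeff_def power_minus[of u]
    by (simp add: power_mult_distrib[symmetric] algebra_simps)
  moreover have "(1 + - u) powr (-(1/2)) = inverse (sqrt (1 - u))"
    using assms by (simp add: powr_minus powr_half_sqrt)
  ultimately show ?thesis by simp
qed

definition arcsin_coeff :: "nat \<Rightarrow> real" where
  "arcsin_coeff n = (if even n then inv_sqrt_coeff (n div 2) / real (Suc n) else 0)"

lemma arcsin_coeff_nonneg: "0 \<le> arcsin_coeff n"
  unfolding arcsin_coeff_def using inv_sqrt_coeff_nonneg by simp

lemma arcsin_deriv_sums:
  assumes "\<bar>x\<bar> < 1"
  shows "(\<lambda>n. arcsin_coeff n * real (Suc n) * x ^ n) sums inverse (sqrt (1 - x\<^sup>2))"
proof -
  have "(\<lambda>m. inv_sqrt_coeff m * (x\<^sup>2) ^ m) sums inverse (sqrt (1 - x\<^sup>2))"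
    using assms by (intro inv_sqrt_sums) (simp add: abs_square_less_1)
  moreover have "arcsin_coeff (2 * m) * real (Suc (2 * m)) * x ^ (2 * m)
      = inv_sqrt_coeff m * (x\<^sup>2) ^ m" for m
    by (simp add: arcsin_coeff_def power_mult)
  ultimately have "(\<lambda>m. arcsin_coeff (2 * m) * real (Suc (2 * m)) * x ^ (2 * m))
      sums inverse (sqrt (1 - x\<^sup>2))"
    by simp
  then show ?thesis
    by (subst (asm) sums_mono_reindex[of "\<lambda>m. 2 * m"])
       (auto simp: strict_mono_def arcsin_coeff_def)
qed

lemma summable_arcsin_series:
  assumes "\<bar>x\<bar> < 1"
  shows "summable (\<lambda>n. arcsin_coeff n * x ^ Suc n)"
proof (rule summable_comparison_test')
  show "summable (\<lambda>n. \<bar>x\<bar> * (arcsin_coeff n * real (Suc n) * \<bar>x\<bar> ^ n))"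
    using assms by (intro summable_mult sums_summable[OF arcsin_deriv_sums]) simp
  fix n
  have "norm (arcsin_coeff n * x ^ Suc n) = arcsin_coeff n * \<bar>x\<bar> ^ Suc n"
    using arcsin_coeff_nonneg[of n] by (simp add: abs_mult power_abs)
  also have "\<dots> \<le> arcsin_coeff n * (real (Suc n) * \<bar>x\<bar> ^ Suc n)"
  proof (rule mult_left_mono)
    show "\<bar>x\<bar> ^ Suc n \<le> real (Suc n) * \<bar>x\<bar> ^ Suc n"
      using mult_right_mono[of 1 "real (Suc n)" "\<bar>x\<bar> ^ Suc n"] by simp
  qed (rule arcsin_coeff_nonneg)
  finally show "norm (arcsin_coeff n * x ^ Suc n)
      \<le> \<bar>x\<bar> * (arcsin_coeff n * real (Suc n) * \<bar>x\<bar> ^ n)"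
    by (simp add: mult_ac)
qed

lemma arcsin_sums:
  assumes "\<bar>x\<bar> < 1"
  shows "(\<lambda>n. arcsin_coeff n * x ^ Suc n) sums arcsin x"
proof -
  define S where "S y = (\<Sum>n. arcsin_coeff n * y ^ Suc n)" for y
  have "DERIV (\<lambda>y. S y - arcsin y) y :> 0" if "y \<in> {-1<..<1}" for y
  proof -
    have "summable (\<lambda>n. arcsin_coeff n * real (Suc n) * z ^ n)" if "z \<in> {-1<..<1}" for z
      using that by (intro sums_summable[OF arcsin_deriv_sums]) auto
    then have "DERIV S y :> (\<Sum>n. arcsin_coeff n * real (Suc n) * y ^ n)"
      unfolding S_def using that by (intro DERIV_power_series') auto
    then have "DERIV S y :> inverse (sqrt (1 - y\<^sup>2))"
      using sums_unique[OF arcsin_deriv_sums, of y] that by auto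
    then show ?thesis
      using DERIV_diff[OF _ DERIV_arcsin] that by fastforce
  qed
  then obtain c where c: "\<And>y. y \<in> {-1<..<1} \<Longrightarrow> S y - arcsin y = c"
    using has_field_derivative_zero_constant[of "{-1<..<1}" "\<lambda>y. S y - arcsin y"]
    by (auto simp: has_field_derivative_at_within)
  have "c = 0" using c[of 0] by (simp add: S_def)
  then have "S x = arcsin x" using c[of x] assms by (simp add: abs_less_iff)
  then show ?thesis
    using summable_sums[OF summable_arcsin_series[OF assms]] unfolding S_def by simp
qed

lemma psd_kernel_arcsin_scaled_inner:
  fixes x :: "'i::finite \<Rightarrow> 'a::euclidean_space"
  assumes r: "0 \<le> r" "r < 1" and x: "\<And>i j. \<bar>x i \<bullet> x j\<bar> \<le> 1"
  shows "psd_kernel (\<lambda>i j. arcsin (r * (x i \<bullet> x j)))"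
proof (rule psd_kernel_suminf
    [where K = "\<lambda>n i j. (arcsin_coeff n * r ^ Suc n) * (x i \<bullet> x j) ^ Suc n"])
  show "psd_kernel (\<lambda>i j. (arcsin_coeff n * r ^ Suc n) * (x i \<bullet> x j) ^ Suc n)" for n
    using r by (intro psd_kernel_cmult psd_kernel_inner_power mult_nonneg_nonneg
        arcsin_coeff_nonneg zero_le_power)
  show "(\<lambda>n. (arcsin_coeff n * r ^ Suc n) * (x i \<bullet> x j) ^ Suc n)
      sums arcsin (r * (x i \<bullet> x j))" for i j
  proof -
    have "\<bar>r * (x i \<bullet> x j)\<bar> \<le> r"
      using r x[of i j] by (simp add: abs_mult mult_left_le)
    then have "(\<lambda>n. arcsin_coeff n * (r * (x i \<bullet> x j)) ^ Suc n)
        sums arcsin (r * (x i \<bullet> x j))"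
      using r by (intro arcsin_sums) simp
    then show ?thesis by (simp add: power_mult_distrib mult_ac)
  qed
qed

lemma psd_kernel_arcsin_inner:
  fixes x :: "'i::finite \<Rightarrow> 'a::euclidean_space"
  assumes x: "\<And>i j. \<bar>x i \<bullet> x j\<bar> \<le> 1"
  shows "psd_kernel (\<lambda>i j. arcsin (x i \<bullet> x j))"
proof (rule psd_kernel_tendsto
    [where K = "\<lambda>k i j. arcsin (real k / real (Suc k) * (x i \<bullet> x j))"])
  show "psd_kernel (\<lambda>i j. arcsin (real k / real (Suc k) * (x i \<bullet> x j)))" for k
    using x by (intro psd_kernel_arcsin_scaled_inner) auto
  show "(\<lambda>k. arcsin (real k / real (Suc k) * (x i \<bullet> x j))) \<longlonglongrightarrow> arcsin (x i \<bullet> x j)"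
    for i j
  proof (rule continuous_on_tendsto_compose[OF continuous_on_arcsin'])
    show "(\<lambda>k. real k / real (Suc k) * (x i \<bullet> x j)) \<longlonglongrightarrow> x i \<bullet> x j"
      using tendsto_mult_right[OF LIMSEQ_n_over_Suc_n, of "x i \<bullet> x j"] by simp
    have "\<bar>real k / real (Suc k) * (x i \<bullet> x j)\<bar> \<le> 1" for k
      unfolding abs_mult using x[of i j] by (intro mult_le_one) auto
    then show "\<forall>\<^sub>F k in sequentially. real k / real (Suc k) * (x i \<bullet> x j) \<in> {-1..1}"
      by (intro always_eventually allI) (simp only: atLeastAtMost_iff abs_le_iff minus_le_iff)
  qed (use x in \<open>auto simp: abs_le_iff\<close>)
qed

lemma ntk_eq_arcsin:
  assumes "\<bar>x \<bullet> y\<bar> \<le> 1"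
  shows "ntk x y = (x \<bullet> y) / 4 + (x \<bullet> y) * arcsin (x \<bullet> y) / (2 * pi)"
  using assms by (simp add: ntk_def arccos_arcsin_eq field_simps)

lemma psd_kernel_ntk:
  fixes x :: "'i::finite \<Rightarrow> real^'d"
  assumes "\<And>i. norm (x i) \<le> 1"
  shows "psd_kernel (\<lambda>i j. ntk (x i) (x j))"
proof -
  have x: "\<bar>x i \<bullet> x j\<bar> \<le> 1" for i j
    using Cauchy_Schwarz_ineq2[of "x i" "x j"] mult_le_one[OF assms norm_ge_zero assms, of i j]
    by linarith
  have "psd_kernel (\<lambda>i j. 1/4 * (x i \<bullet> x j) ^ 1
      + 1 / (2 * pi) * ((x i \<bullet> x j) * arcsin (x i \<bullet> x j)))"
    using x by (intro psd_kernel_add psd_kernel_cmult psd_kernel_inner_power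
        psd_kernel_mult_inner psd_kernel_arcsin_inner) auto
  then show ?thesis
    using ntk_eq_arcsin[OF x] by simp
qed

lemma Ktr_quadratic_form_nonneg:
  assumes "\<And>j. norm (X j) \<le> 1"
  shows "0 \<le> v \<bullet> (Ktr X *v v)"
proof -
  have "v \<bullet> (Ktr X *v v) = (\<Sum>i\<in>UNIV. \<Sum>j\<in>UNIV. v $ i * v $ j * ntk (X i) (X j))"
    by (simp add: inner_vec_def matrix_vector_mult_def Ktr_def sum_distrib_left mult_ac)
  then show ?thesis
    using psd_kernelD[OF psd_kernel_ntk[of X, OF assms], of "\<lambda>i. v $ i"] by simp
qed

lemma invertible_if_pos_def:
  fixes M :: "real^'n^'n"
  assumes "\<And>v. v \<noteq> 0 \<Longrightarrow> 0 < v \<bullet> (M *v v)"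
  shows "invertible M"
  unfolding invertible_left_inverse matrix_left_invertible_ker
  using assms by fastforce

lemma matrix_inv_right:
  fixes M :: "'a::semiring_1^'n^'n"
  assumes "invertible M"
  shows "M ** matrix_inv M = mat 1"
  using someI_ex[OF assms[unfolded invertible_def]] unfolding matrix_inv_def by blast

lemma transpose_matrix_inv_symmetric:
  fixes M :: "'a::comm_semiring_1^'n^'n"
  assumes "invertible M" and "transpose M = M"
  shows "transpose (matrix_inv M) = matrix_inv M"
proof -
  have left_inv: "transpose (matrix_inv M) ** M = mat 1"
    using arg_cong[OF matrix_inv_right[OF assms(1)], of transpose] assms(2)
    by (simp add: matrix_transpose_mul transpose_mat)
  have "transpose (matrix_inv M) = transpose (matrix_inv M) ** (M ** matrix_inv M)"
    by (simp add: matrix_inv_right[OF assms(1)])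
  also have "\<dots> = matrix_inv M"
    by (simp add: matrix_mul_assoc left_inv)
  finally show ?thesis .
qed

lemma matrix_inv_diagonal_pos:
  fixes M :: "real^'n^'n"
  assumes pd: "\<And>v. v \<noteq> 0 \<Longrightarrow> 0 < v \<bullet> (M *v v)"
  shows "0 < matrix_inv M $ i $ i"
proof -
  define a where "a = matrix_inv M *v axis i 1"
  have "M *v a = axis i 1"
    unfolding a_def
    by (simp add: matrix_vector_mul_assoc matrix_inv_right[OF invertible_if_pos_def[OF pd]])
  then have "a \<noteq> 0" by (auto simp: axis_eq_0_iff)
  then have "0 < a \<bullet> axis i 1" using pd \<open>M *v a = axis i 1\<close> by metis
  then show ?thesis
    by (simp add: a_def inner_axis matrix_vector_mult_basis column_def)
qed

lemma Ktr_add_scaled_id_pos_def: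
  assumes "\<And>j. norm (X j) \<le> 1" and "0 < lam" and "v \<noteq> 0"
  shows "0 < v \<bullet> ((Ktr X + lam *\<^sub>R mat 1) *v v)"
proof -
  have "v \<bullet> ((Ktr X + lam *\<^sub>R mat 1) *v v) = v \<bullet> (Ktr X *v v) + lam * (v \<bullet> v)"
    by (simp add: matrix_vector_mult_add_rdistrib inner_add_right
        scaleR_matrix_vector_assoc[symmetric])
  moreover have "0 < lam * (v \<bullet> v)"
    using assms(2,3) by simp
  ultimately show ?thesis
    using Ktr_quadratic_form_nonneg[of X v, OF assms(1)] by linarith
qed

lemma Kvec_train_inner: "Kvec X (X i) \<bullet> w = (Ktr X *v w) $ i"
  by (simp add: inner_vec_def matrix_vector_mult_def Kvec_def Ktr_def ntk_def inner_commute)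

lemma Ktr_mult_Ainv:
  assumes "invertible (Ktr X + lam *\<^sub>R mat 1)"
  shows "Ktr X *v (Ainv X lam *v w) = w - lam *\<^sub>R (Ainv X lam *v w)"
proof -
  have "(Ktr X + lam *\<^sub>R mat 1) *v (Ainv X lam *v w) = w"
    by (simp add: Ainv_def matrix_vector_mul_assoc matrix_inv_right[OF assms])
  then show ?thesis
    by (simp add: matrix_vector_mult_add_rdistrib scaleR_matrix_vector_assoc[symmetric]
        eq_diff_eq)
qed

lemma f_loo_eq_downdate:
  "f_loo X Y lam i x
     = f_ntk X Y lam x - alpha_ntk X lam i x * (column i (Ainv X lam) \<bullet> Y) / Ainv X lam $ i $ i"
proof -
  define A where "A = Ainv X lam"
  have "(A - (\<chi> a b. A $ a $ i * A $ b $ i / A $ i $ i)) *v Y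
      = A *v Y - ((column i A \<bullet> Y) / A $ i $ i) *\<^sub>R column i A"
    by (simp add: vec_eq_iff matrix_vector_mult_def column_def inner_vec_def
        sum_subtractf sum_distrib_left sum_divide_distrib algebra_simps)
  then show ?thesis
    unfolding f_loo_def f_ntk_def alpha_ntk_def A_def[symmetric] Let_def matrix_vector_mult_basis
    by (simp add: inner_diff_right)
qed

lemma f_loo_residual_at_train:
  assumes "\<And>j. norm (X j) \<le> 1" and "0 < lam"
  shows "f_loo X Y lam i (X i) - Y $ i = - (column i (Ainv X lam) \<bullet> Y) / Ainv X lam $ i $ i"
proof -
  define A where "A = Ainv X lam"
  have pd: "\<And>v. v \<noteq> 0 \<Longrightarrow> 0 < v \<bullet> ((Ktr X + lam *\<^sub>R mat 1) *v v)"
    using Ktr_add_scaled_id_pos_def[of X, OF assms] .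
  have KA: "Ktr X *v (A *v w) = w - lam *\<^sub>R (A *v w)" for w
    unfolding A_def using Ktr_mult_Ainv[OF invertible_if_pos_def[OF pd]] .
  have "transpose (Ktr X + lam *\<^sub>R mat 1) = Ktr X + lam *\<^sub>R mat 1"
    by (simp add: vec_eq_iff transpose_def Ktr_def ntk_def mat_def inner_commute)
  then have "transpose A = A"
    unfolding A_def Ainv_def
    by (intro transpose_matrix_inv_symmetric invertible_if_pos_def pd)
  then have "column i A \<bullet> Y = (A *v Y) $ i"
    using column_transpose[of i A] by (simp add: row_def matrix_vector_mul_component)
  have "0 < A $ i $ i"
    unfolding A_def Ainv_def by (rule matrix_inv_diagonal_pos[OF pd])
  have f_train: "f_ntk X Y lam (X i) = Y $ i - lam * (A *v Y) $ i"
    unfolding f_ntk_def A_def[symmetric] Kvec_train_inner KA by simp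
  have alpha_train: "alpha_ntk X lam i (X i) = 1 - lam * A $ i $ i"
    unfolding alpha_ntk_def A_def[symmetric] Kvec_train_inner KA
    by (simp add: matrix_vector_mult_basis column_def)
  show ?thesis
    unfolding f_loo_eq_downdate A_def[symmetric] \<open>column i A \<bullet> Y = (A *v Y) $ i\<close>
      f_train alpha_train
    using \<open>0 < A $ i $ i\<close> by (simp add: field_simps)
qed

theorem proposition2:
  fixes X :: "'n::finite \<Rightarrow> real^'d" and Y :: "real^'n" and lam :: real
    and xte :: "real^'d" and yte :: real and i :: 'n
  assumes "\<And>j. norm (X j) = 1"
    and "lam > 0"
    and "norm xte = 1"
  shows "I_ntk X Y lam i xte yte =
           alpha_ntk X lam i xte * (f_ntk X Y lam xte - yte) * (f_loo X Y lam i (X i) - Y $ i)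
           + (1/2) * (alpha_ntk X lam i xte)^2 * (f_loo X Y lam i (X i) - Y $ i)^2"
proof -
  define q where "q = (column i (Ainv X lam) \<bullet> Y) / Ainv X lam $ i $ i"
  have loo_test: "f_loo X Y lam i xte = f_ntk X Y lam xte - alpha_ntk X lam i xte * q"
    unfolding f_loo_eq_downdate q_def by simp
  have loo_train: "f_loo X Y lam i (X i) - Y $ i = - q"
    unfolding q_def using f_loo_residual_at_train[of X lam Y i] assms(1,2) by simp
  show ?thesis
    unfolding I_ntk_def loo_test loo_train by (simp add: power2_eq_square field_simps)
qed

end
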